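(* Under the standing assumptions, let $\rho_{k+1}\ge\rho_k>0$ and $\sigma_k\ge\sigma_{k+1}>0$. Then for every $x\in X$, $$\|y^*_{\rho_{k+1},\sigma_{k+1}}(x)-y^*_{\rho_k,\sigma_k}(x)\|\le\frac{\rho_{k+1}-\rho_k}{\sigma_k}M^2+\frac{\sigma_k-\sigma_{k+1}}{\sigma_k}M .$$
   Context: Standing assumptions: $X\subset\mathbb{R}^n$, $Y\subset\mathbb{R}^m$ nonempty, convex, compact; $f$ continuously differentiable with Lipschitz gradient on $X\times Y$, $f(x,\cdot)$ concave on $Y$; $c=(c_1,\dots,c_p)$ with continuously differentiable components having Lipschitz gradients, each $c_i(x,\cdot)$ convex on $Y$. Notation: $[z]_+=\max\{z,0\}$ componentwise; $\psi_{\rho,\sigma}(x,y):=f(x,y)-\frac{\rho}{2}\|[c(x,y)]_+\|^2-\frac{\sigma}{2}\|y\|^2$; $y^*_{\rho,\sigma}(x)$ is the unique maximizer of $\psi_{\rho,\sigma}(x,\cdot)$ over $Y$. $M$ is any constant with $M\ge\sup_{X\times Y}\|c(x,y)\|$, $M\ge\sup_{X\times Y}\|\nabla c(x,y)\|$ (operator norm of the Jacobian of $c$) and $M\ge\sup_{y\in Y}\|y\|$. *)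

theory Defs
  imports "HOL-Analysis.Analysis"
begin

definition pos_part :: "real^'p \<Rightarrow> real^'p" where
  "pos_part v = (\<chi> i. max (v $ i) 0)"

definition psi ::
  "(real^'n \<Rightarrow> real^'m \<Rightarrow> real) \<Rightarrow> (real^'n \<Rightarrow> real^'m \<Rightarrow> real^'p)
   \<Rightarrow> real \<Rightarrow> real \<Rightarrow> real^'n \<Rightarrow> real^'m \<Rightarrow> real" where
  "psi f c \<rho> \<sigma> x y = f x y - \<rho> / 2 * (norm (pos_part (c x y)))\<^sup>2 - \<sigma> / 2 * (norm y)\<^sup>2"

definition ystar ::
  "(real^'m) set \<Rightarrow> (real^'n \<Rightarrow> real^'m \<Rightarrow> real) \<Rightarrow> (real^'n \<Rightarrow> real^'m \<Rightarrow> real^'p)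
   \<Rightarrow> real \<Rightarrow> real \<Rightarrow> real^'n \<Rightarrow> real^'m" where
  "ystar Y f c \<rho> \<sigma> x = (THE y. y \<in> Y \<and> (\<forall>z\<in>Y. psi f c \<rho> \<sigma> x z \<le> psi f c \<rho> \<sigma> x y))"

end

theory Submission
  imports Defs
begin

text \<open>For fixed x, psi_{rho,sigma}(x,.) is sigma-strongly concave: f(x,.) is concave,
|[c(x,.)]_+|^2 is convex since each c_i(x,.) is convex and t -> max(t,0)^2 is convex and
nondecreasing, and -sigma/2 |y|^2 supplies the strong concavity. Going from (rho_k, sigma_k) to
(rho_{k+1}, sigma_{k+1}) adds the perturbation
(rho_k - rho_{k+1})/2 |[c]_+|^2 + (sigma_k - sigma_{k+1})/2 |y|^2, which is L-Lipschitz on Y with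
L = (rho_{k+1} - rho_k) M^2 + (sigma_k - sigma_{k+1}) M. Comparing the quadratic growth of a
sigma-strongly concave function around its maximizer with the first-order gain of the perturbed
function at its own maximizer shows that an L-Lipschitz perturbation moves the maximizer by at
most L / sigma.\<close>

definition strongly_concave_on :: "real \<Rightarrow> 'a::real_normed_vector set \<Rightarrow> ('a \<Rightarrow> real) \<Rightarrow> bool" where
  "strongly_concave_on \<sigma> S h \<longleftrightarrow>
     (\<forall>u\<in>S. \<forall>v\<in>S. \<forall>t. 0 \<le> t \<longrightarrow> t \<le> 1 \<longrightarrow>
        (1 - t) * h u + t * h v + \<sigma> / 2 * (t * (1 - t)) * (norm (u - v))\<^sup>2
          \<le> h ((1 - t) *\<^sub>R u + t *\<^sub>R v))"

lemma strongly_concave_onD: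
  assumes "strongly_concave_on \<sigma> S h" "u \<in> S" "v \<in> S" "0 \<le> t" "t \<le> 1"
  shows "(1 - t) * h u + t * h v + \<sigma> / 2 * (t * (1 - t)) * (norm (u - v))\<^sup>2
           \<le> h ((1 - t) *\<^sub>R u + t *\<^sub>R v)"
  using assms unfolding strongly_concave_on_def by blast

lemma le_of_forall_le_add_mult:
  fixes A B C :: real
  assumes "\<And>s. 0 < s \<Longrightarrow> s \<le> 1 \<Longrightarrow> A \<le> B + s * C"
  shows "A \<le> B"
proof (rule field_le_epsilon)
  fix e :: real
  assume e: "0 < e"
  define s where "s = min 1 (e / (\<bar>C\<bar> + 1))"
  have s: "0 < s" "s \<le> 1" "s * (\<bar>C\<bar> + 1) \<le> e"
    using e by (auto simp: s_def min_mult_distrib_right)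
  have "s * C \<le> s * (\<bar>C\<bar> + 1)"
    using s by (intro mult_left_mono) auto
  with s assms[OF s(1,2)] show "A \<le> B + e" by linarith
qed

lemma strongly_concave_on_max_quadratic_growth:
  assumes S: "convex S" and h: "strongly_concave_on \<sigma> S h"
    and y0: "y0 \<in> S" "\<And>z. z \<in> S \<Longrightarrow> h z \<le> h y0" and y: "y \<in> S"
  shows "\<sigma> / 2 * (norm (y - y0))\<^sup>2 \<le> h y0 - h y"
proof (rule le_of_forall_le_add_mult)
  fix s :: real
  assume s: "0 < s" "s \<le> 1"
  have "(1 - s) *\<^sub>R y0 + s *\<^sub>R y \<in> S"
    using S y0(1) y s by (simp add: convex_alt)
  with strongly_concave_onD[OF h y0(1) y, of s] s y0(2)
  have "(1 - s) * h y0 + s * h y + \<sigma> / 2 * (s * (1 - s)) * (norm (y - y0))\<^sup>2 \<le> h y0"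
    by (force simp: norm_minus_commute)
  then have "s * (\<sigma> / 2 * (norm (y - y0))\<^sup>2)
      \<le> s * (h y0 - h y + s * (\<sigma> / 2 * (norm (y - y0))\<^sup>2))"
    by (simp add: field_simps)
  with s show "\<sigma> / 2 * (norm (y - y0))\<^sup>2 \<le> h y0 - h y + s * (\<sigma> / 2 * (norm (y - y0))\<^sup>2)"
    by simp
qed

lemma strongly_concave_on_ex1_max:
  assumes "compact S" "S \<noteq> {}" "convex S" "continuous_on S h"
    and h: "strongly_concave_on \<sigma> S h" and "0 < \<sigma>"
  shows "\<exists>!y. y \<in> S \<and> (\<forall>z\<in>S. h z \<le> h y)"
proof -
  obtain y where y: "y \<in> S" "\<forall>z\<in>S. h z \<le> h y"
    using continuous_attains_sup[OF assms(1,2,4)] by blast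
  show ?thesis
  proof (rule ex1I[of _ y])
    fix w
    assume w: "w \<in> S \<and> (\<forall>z\<in>S. h z \<le> h w)"
    have "\<sigma> / 2 * (norm (w - y))\<^sup>2 \<le> h y - h w"
      using y w by (intro strongly_concave_on_max_quadratic_growth[OF \<open>convex S\<close> h]) auto
    moreover have "h y \<le> h w"
      using y w by blast
    ultimately have "\<sigma> / 2 * (norm (w - y))\<^sup>2 \<le> 0"
      by linarith
    with \<open>0 < \<sigma>\<close> show "w = y"
      by (simp add: mult_le_0_iff)
  qed (use y in blast)
qed

lemma strongly_concave_on_argmax_perturbation:
  assumes S: "convex S" and h: "strongly_concave_on \<sigma> S h"
    and y0: "y0 \<in> S" "\<And>z. z \<in> S \<Longrightarrow> h z \<le> h y0"
    and y1: "y1 \<in> S" "\<And>z. z \<in> S \<Longrightarrow> h z + \<phi> z \<le> h y1 + \<phi> y1"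
    and \<phi>: "\<And>u v. u \<in> S \<Longrightarrow> v \<in> S \<Longrightarrow> \<phi> u - \<phi> v \<le> L * norm (u - v)" and "0 \<le> L"
  shows "\<sigma> * norm (y1 - y0) \<le> L"
proof -
  define d where "d = norm (y1 - y0)"
  have growth: "\<sigma> / 2 * d\<^sup>2 \<le> h y0 - h y1"
    unfolding d_def by (rule strongly_concave_on_max_quadratic_growth[OF S h y0 y1(1)])
  have "h y0 - h y1 + \<sigma> / 2 * d\<^sup>2 \<le> L * d"
  proof (rule le_of_forall_le_add_mult)
    fix t :: real
    assume t: "0 < t" "t \<le> 1"
    define yt where "yt = (1 - t) *\<^sub>R y1 + t *\<^sub>R y0"
    have yt: "yt \<in> S"
      using S y0(1) y1(1) t by (simp add: convex_alt yt_def)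
    have "y1 - yt = t *\<^sub>R (y1 - y0)"
      by (simp add: yt_def algebra_simps)
    then have "norm (y1 - yt) = t * d"
      using t by (simp add: d_def)
    then have "\<phi> y1 - \<phi> yt \<le> L * (t * d)"
      using \<phi>[OF y1(1) yt] by simp
    moreover have "(1 - t) * h y1 + t * h y0 + \<sigma> / 2 * (t * (1 - t)) * d\<^sup>2 \<le> h yt"
      using strongly_concave_onD[OF h y1(1) y0(1), of t] t by (simp add: yt_def d_def)
    moreover have "h yt + \<phi> yt \<le> h y1 + \<phi> y1"
      using y1(2)[OF yt] .
    ultimately have "t * (h y0 - h y1 + \<sigma> / 2 * d\<^sup>2) \<le> t * (L * d + t * (\<sigma> / 2 * d\<^sup>2))"
      by (simp add: field_simps)
    with t show "h y0 - h y1 + \<sigma> / 2 * d\<^sup>2 \<le> L * d + t * (\<sigma> / 2 * d\<^sup>2)"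
      by simp
  qed
  with growth have "d * (\<sigma> * d) \<le> d * L"
    by (simp add: power2_eq_square algebra_simps)
  then show ?thesis
    using \<open>0 \<le> L\<close> by (cases "d = 0") (auto simp: d_def)
qed

lemma power2_norm_pos_part: "(norm (pos_part (v::real^'p)))\<^sup>2 = (\<Sum>i\<in>UNIV. (max (v $ i) 0)\<^sup>2)"
  unfolding norm_vec_def L2_set_def pos_part_def by (simp add: sum_nonneg)

lemma norm_pos_part_le: "norm (pos_part (v::real^'p)) \<le> norm v"
  by (rule norm_le_componentwise_cart) (auto simp: pos_part_def)

lemma norm_pos_part_diff_le: "norm (pos_part u - pos_part (v::real^'p)) \<le> norm (u - v)"
  by (rule norm_le_componentwise_cart) (auto simp: pos_part_def)

lemma abs_power2_norm_diff_le:
  fixes a b :: "'a::real_normed_vector"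
  assumes "norm a \<le> M" "norm b \<le> M"
  shows "\<bar>(norm a)\<^sup>2 - (norm b)\<^sup>2\<bar> \<le> 2 * M * norm (a - b)"
proof -
  have "(norm a)\<^sup>2 - (norm b)\<^sup>2 = (norm a - norm b) * (norm a + norm b)"
    by (simp add: power2_eq_square algebra_simps)
  then have "\<bar>(norm a)\<^sup>2 - (norm b)\<^sup>2\<bar> = \<bar>norm a - norm b\<bar> * (norm a + norm b)"
    by (simp add: abs_mult)
  also have "\<dots> \<le> norm (a - b) * (2 * M)"
    using assms by (intro mult_mono norm_triangle_ineq3) auto
  finally show ?thesis
    by (simp add: algebra_simps)
qed

lemma abs_power2_norm_pos_part_diff_le:
  fixes a b :: "real^'p"
  assumes "norm a \<le> M" "norm b \<le> M"
  shows "\<bar>(norm (pos_part a))\<^sup>2 - (norm (pos_part b))\<^sup>2\<bar> \<le> 2 * M * norm (a - b)"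
proof -
  have "\<bar>(norm (pos_part a))\<^sup>2 - (norm (pos_part b))\<^sup>2\<bar> \<le> 2 * M * norm (pos_part a - pos_part b)"
    using assms norm_pos_part_le[of a] norm_pos_part_le[of b] by (intro abs_power2_norm_diff_le) auto
  also have "\<dots> \<le> 2 * M * norm (a - b)"
    using assms(1) norm_ge_zero[of a] by (intro mult_left_mono norm_pos_part_diff_le) linarith
  finally show ?thesis .
qed

lemma convex_on_sum_fun:
  assumes "finite I" "convex S" "\<And>i. i \<in> I \<Longrightarrow> convex_on S (g i)"
  shows "convex_on S (\<lambda>x. \<Sum>i\<in>I. g i x)"
  using assms by (induction I rule: finite_induct) (auto simp: convex_on_const)

lemma convex_on_power2_max_zero:
  fixes g :: "'a::real_vector \<Rightarrow> real"
  assumes g: "convex_on S g"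
  shows "convex_on S (\<lambda>x. (max (g x) 0)\<^sup>2)"
proof (rule convex_onI)
  fix t :: real and u v
  assume t: "0 < t" "t < 1" and uv: "u \<in> S" "v \<in> S"
  have "g ((1 - t) *\<^sub>R u + t *\<^sub>R v) \<le> (1 - t) * g u + t * g v"
    using convex_onD[OF g] t uv by simp
  also have "\<dots> \<le> (1 - t) * max (g u) 0 + t * max (g v) 0"
    using t by (intro add_mono mult_left_mono) auto
  finally have "(max (g ((1 - t) *\<^sub>R u + t *\<^sub>R v)) 0)\<^sup>2 \<le> ((1 - t) * max (g u) 0 + t * max (g v) 0)\<^sup>2"
    using t by (intro power_mono) auto
  also have "\<dots> \<le> (1 - t) * (max (g u) 0)\<^sup>2 + t * (max (g v) 0)\<^sup>2"
    using convex_onD[OF convex_power2, of t "max (g u) 0" "max (g v) 0"] t by simp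
  finally show "(max (g ((1 - t) *\<^sub>R u + t *\<^sub>R v)) 0)\<^sup>2 \<le> (1 - t) * (max (g u) 0)\<^sup>2 + t * (max (g v) 0)\<^sup>2" .
qed (use convex_on_imp_convex[OF g] in blast)

lemma convex_on_power2_norm_pos_part:
  fixes c :: "'a::real_vector \<Rightarrow> real^'p"
  assumes "\<And>i. convex_on S (\<lambda>x. c x $ i)"
  shows "convex_on S (\<lambda>x. (norm (pos_part (c x)))\<^sup>2)"
  unfolding power2_norm_pos_part
  using assms convex_on_imp_convex[OF assms]
  by (intro convex_on_sum_fun convex_on_power2_max_zero) auto

lemma power2_norm_convex_combination:
  fixes u v :: "'a::real_inner"
  shows "(norm ((1 - t) *\<^sub>R u + t *\<^sub>R v))\<^sup>2
           = (1 - t) * (norm u)\<^sup>2 + t * (norm v)\<^sup>2 - t * (1 - t) * (norm (u - v))\<^sup>2"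
  unfolding power2_norm_eq_inner
  by (simp add: inner_add_left inner_add_right inner_diff_left inner_diff_right inner_commute[of v u]
      algebra_simps)

lemma strongly_concave_on_diff_norm_power2:
  fixes g :: "'a::real_inner \<Rightarrow> real"
  assumes g: "concave_on S g"
  shows "strongly_concave_on \<sigma> S (\<lambda>y. g y - \<sigma> / 2 * (norm y)\<^sup>2)"
  unfolding strongly_concave_on_def
proof (intro ballI allI impI)
  fix u v and t :: real
  assume "u \<in> S" "v \<in> S" "0 \<le> t" "t \<le> 1"
  then have "(1 - t) * g u + t * g v \<le> g ((1 - t) *\<^sub>R u + t *\<^sub>R v)"
    using concave_onD[OF g] by blast
  then show "(1 - t) * (g u - \<sigma> / 2 * (norm u)\<^sup>2) + t * (g v - \<sigma> / 2 * (norm v)\<^sup>2)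
        + \<sigma> / 2 * (t * (1 - t)) * (norm (u - v))\<^sup>2
      \<le> g ((1 - t) *\<^sub>R u + t *\<^sub>R v) - \<sigma> / 2 * (norm ((1 - t) *\<^sub>R u + t *\<^sub>R v))\<^sup>2"
    unfolding power2_norm_convex_combination by (simp add: field_simps)
qed

lemma strongly_concave_on_psi:
  assumes "concave_on Y (f x)" "\<And>i. convex_on Y (\<lambda>y. c x y $ i)" "0 \<le> \<rho>"
  shows "strongly_concave_on \<sigma> Y (psi f c \<rho> \<sigma> x)"
proof -
  have "concave_on Y (\<lambda>y. f x y - \<rho> / 2 * (norm (pos_part (c x y)))\<^sup>2)"
    using assms by (intro concave_on_diff convex_on_cmul convex_on_power2_norm_pos_part) auto
  then show ?thesis
    using strongly_concave_on_diff_norm_power2 by (simp add: psi_def[abs_def])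
qed

lemma continuous_on_psi:
  assumes "continuous_on Y (f x)" "continuous_on Y (c x)"
  shows "continuous_on Y (psi f c \<rho> \<sigma> x)"
  unfolding psi_def[abs_def] power2_norm_pos_part
  using assms by (intro continuous_intros) auto

lemma ystar_max:
  assumes Y: "compact Y" "Y \<noteq> {}"
    and f: "concave_on Y (f x)" "continuous_on Y (f x)"
    and c: "\<And>i. convex_on Y (\<lambda>y. c x y $ i)" "continuous_on Y (c x)"
    and "0 \<le> \<rho>" "0 < \<sigma>"
  shows "ystar Y f c \<rho> \<sigma> x \<in> Y"
    and "\<And>z. z \<in> Y \<Longrightarrow> psi f c \<rho> \<sigma> x z \<le> psi f c \<rho> \<sigma> x (ystar Y f c \<rho> \<sigma> x)"
proof -
  have "\<exists>!y. y \<in> Y \<and> (\<forall>z\<in>Y. psi f c \<rho> \<sigma> x z \<le> psi f c \<rho> \<sigma> x y)"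
    using Y convex_on_imp_convex[OF c(1)] assms
    by (intro strongly_concave_on_ex1_max[where \<sigma> = \<sigma>] continuous_on_psi strongly_concave_on_psi)
  then have "ystar Y f c \<rho> \<sigma> x \<in> Y
      \<and> (\<forall>z\<in>Y. psi f c \<rho> \<sigma> x z \<le> psi f c \<rho> \<sigma> x (ystar Y f c \<rho> \<sigma> x))"
    unfolding ystar_def by (rule theI')
  then show "ystar Y f c \<rho> \<sigma> x \<in> Y"
    and "\<And>z. z \<in> Y \<Longrightarrow> psi f c \<rho> \<sigma> x z \<le> psi f c \<rho> \<sigma> x (ystar Y f c \<rho> \<sigma> x)"
    by auto
qed

lemma psi_diff_lipschitz:
  fixes c :: "real^'n \<Rightarrow> real^'m \<Rightarrow> real^'p"
  assumes c: "\<And>y. y \<in> Y \<Longrightarrow> norm (c x y) \<le> M"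
    and c_lip: "\<And>u v. u \<in> Y \<Longrightarrow> v \<in> Y \<Longrightarrow> norm (c x u - c x v) \<le> M * norm (u - v)"
    and y: "\<And>y. y \<in> Y \<Longrightarrow> norm y \<le> M"
    and "\<rho>0 \<le> \<rho>1" "\<sigma>1 \<le> \<sigma>0" and uv: "u \<in> Y" "v \<in> Y"
  shows "(psi f c \<rho>1 \<sigma>1 x u - psi f c \<rho>0 \<sigma>0 x u) - (psi f c \<rho>1 \<sigma>1 x v - psi f c \<rho>0 \<sigma>0 x v)
           \<le> ((\<rho>1 - \<rho>0) * M\<^sup>2 + (\<sigma>0 - \<sigma>1) * M) * norm (u - v)"
proof -
  have "0 \<le> M"
    using y[OF uv(1)] norm_ge_zero[of u] by linarith
  have "\<bar>(norm (pos_part (c x v)))\<^sup>2 - (norm (pos_part (c x u)))\<^sup>2\<bar> \<le> 2 * M * norm (c x v - c x u)"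
    using c uv by (intro abs_power2_norm_pos_part_diff_le) auto
  also have "\<dots> \<le> 2 * M * (M * norm (u - v))"
    using \<open>0 \<le> M\<close> c_lip[OF uv(2,1)] by (intro mult_left_mono) (auto simp: norm_minus_commute)
  finally have penalty: "(\<rho>1 - \<rho>0) / 2 * ((norm (pos_part (c x v)))\<^sup>2 - (norm (pos_part (c x u)))\<^sup>2)
      \<le> (\<rho>1 - \<rho>0) / 2 * (2 * M * (M * norm (u - v)))"
    using \<open>\<rho>0 \<le> \<rho>1\<close> by (intro mult_left_mono) auto
  have regularizer: "(\<sigma>0 - \<sigma>1) / 2 * ((norm u)\<^sup>2 - (norm v)\<^sup>2) \<le> (\<sigma>0 - \<sigma>1) / 2 * (2 * M * norm (u - v))"
    using abs_power2_norm_diff_le[OF y[OF uv(1)] y[OF uv(2)]] \<open>\<sigma>1 \<le> \<sigma>0\<close>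
    by (intro mult_left_mono) auto
  have "(psi f c \<rho>1 \<sigma>1 x u - psi f c \<rho>0 \<sigma>0 x u) - (psi f c \<rho>1 \<sigma>1 x v - psi f c \<rho>0 \<sigma>0 x v)
      = (\<rho>1 - \<rho>0) / 2 * ((norm (pos_part (c x v)))\<^sup>2 - (norm (pos_part (c x u)))\<^sup>2)
        + (\<sigma>0 - \<sigma>1) / 2 * ((norm u)\<^sup>2 - (norm v)\<^sup>2)"
    unfolding psi_def by (simp add: field_simps)
  moreover have "(\<rho>1 - \<rho>0) / 2 * (2 * M * (M * norm (u - v))) + (\<sigma>0 - \<sigma>1) / 2 * (2 * M * norm (u - v))
      = ((\<rho>1 - \<rho>0) * M\<^sup>2 + (\<sigma>0 - \<sigma>1) * M) * norm (u - v)"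
    by (simp add: power2_eq_square field_simps)
  ultimately show ?thesis
    using penalty regularizer by linarith
qed

theorem norm_ystar_diff_le:
  fixes c :: "real^'n \<Rightarrow> real^'m \<Rightarrow> real^'p"
  assumes Y: "compact Y" "Y \<noteq> {}"
    and f: "concave_on Y (f x)" "continuous_on Y (f x)"
    and c: "\<And>i. convex_on Y (\<lambda>y. c x y $ i)" "continuous_on Y (c x)"
    and M_c: "\<And>y. y \<in> Y \<Longrightarrow> norm (c x y) \<le> M"
    and c_lip: "\<And>u v. u \<in> Y \<Longrightarrow> v \<in> Y \<Longrightarrow> norm (c x u - c x v) \<le> M * norm (u - v)"
    and M_y: "\<And>y. y \<in> Y \<Longrightarrow> norm y \<le> M"
    and \<rho>: "0 \<le> \<rho>0" "\<rho>0 \<le> \<rho>1" and \<sigma>: "0 < \<sigma>1" "\<sigma>1 \<le> \<sigma>0"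
  shows "norm (ystar Y f c \<rho>1 \<sigma>1 x - ystar Y f c \<rho>0 \<sigma>0 x)
           \<le> ((\<rho>1 - \<rho>0) * M\<^sup>2 + (\<sigma>0 - \<sigma>1) * M) / \<sigma>0"
proof -
  define L where "L = (\<rho>1 - \<rho>0) * M\<^sup>2 + (\<sigma>0 - \<sigma>1) * M"
  have "0 \<le> M"
    using Y(2) M_y norm_ge_zero by (meson ex_in_conv order_trans)
  then have "0 \<le> L"
    using \<rho> \<sigma> by (simp add: L_def)
  note max0 = ystar_max[of Y f x c \<rho>0 \<sigma>0, OF Y f c]
    and max1 = ystar_max[of Y f x c \<rho>1 \<sigma>1, OF Y f c]
  have lip: "(psi f c \<rho>1 \<sigma>1 x u - psi f c \<rho>0 \<sigma>0 x u) - (psi f c \<rho>1 \<sigma>1 x v - psi f c \<rho>0 \<sigma>0 x v)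
      \<le> L * norm (u - v)" if "u \<in> Y" "v \<in> Y" for u v
    unfolding L_def
    by (rule psi_diff_lipschitz[where Y = Y and c = c and x = x and M = M, OF M_c c_lip M_y \<rho>(2) \<sigma>(2) that])
  have "\<sigma>0 * norm (ystar Y f c \<rho>1 \<sigma>1 x - ystar Y f c \<rho>0 \<sigma>0 x) \<le> L"
  proof (rule strongly_concave_on_argmax_perturbation
      [where \<phi> = "\<lambda>y. psi f c \<rho>1 \<sigma>1 x y - psi f c \<rho>0 \<sigma>0 x y"])
    show "strongly_concave_on \<sigma>0 Y (psi f c \<rho>0 \<sigma>0 x)"
      using f c \<rho> by (intro strongly_concave_on_psi) auto
  qed (use convex_on_imp_convex[OF c(1)] max0 max1 \<rho> \<sigma> \<open>0 \<le> L\<close> lip in auto)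
  then show ?thesis
    using \<sigma> by (simp add: L_def field_simps)
qed

lemma has_derivative_slice_snd:
  assumes "((\<lambda>z. g (fst z) (snd z)) has_derivative G) (at (x, y))"
  shows "(g x has_derivative (\<lambda>h. G (0, h))) (at y)"
proof -
  have "((\<lambda>y. (x, y)) has_derivative (\<lambda>h. (0, h))) (at y)"
    by (auto intro!: derivative_eq_intros)
  from has_derivative_compose[OF this assms] show ?thesis
    by simp
qed

lemma continuous_on_slice_snd:
  assumes "\<And>y. y \<in> Y \<Longrightarrow> ((\<lambda>z. g (fst z) (snd z)) has_derivative G y) (at (x, y))"
  shows "continuous_on Y (g x)"
  using has_derivative_continuous[OF has_derivative_slice_snd[OF assms]]
  by (intro continuous_at_imp_continuous_on) blast

lemma norm_diff_slice_snd_le: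
  fixes g :: "'a::real_normed_vector \<Rightarrow> 'b::{real_normed_vector, perfect_space} \<Rightarrow> 'c::real_normed_vector"
  assumes "convex Y"
    and deriv: "\<And>y. y \<in> Y \<Longrightarrow> ((\<lambda>z. g (fst z) (snd z)) has_derivative blinfun_apply (D (x, y))) (at (x, y))"
    and bound: "\<And>y. y \<in> Y \<Longrightarrow> norm (D (x, y)) \<le> B"
    and "u \<in> Y" "v \<in> Y"
  shows "norm (g x u - g x v) \<le> B * norm (u - v)"
proof (rule differentiable_bound[OF \<open>convex Y\<close> _ _ \<open>u \<in> Y\<close> \<open>v \<in> Y\<close>])
  fix y
  assume y: "y \<in> Y"
  show "(g x has_derivative (\<lambda>h. D (x, y) (0, h))) (at y within Y)"
    using has_derivative_slice_snd[OF deriv[OF y]] by (rule has_derivative_at_withinI)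
  show "onorm (\<lambda>h. D (x, y) (0, h)) \<le> B"
  proof (rule onorm_le)
    fix h :: 'b
    have "norm (D (x, y) (0, h)) \<le> norm (D (x, y)) * norm ((0::'a), h)"
      by (rule norm_blinfun)
    also have "\<dots> \<le> B * norm h"
      using bound[OF y] by (simp add: norm_Pair mult_right_mono)
    finally show "norm (D (x, y) (0, h)) \<le> B * norm h" .
  qed
qed

theorem lemmaD3:
  fixes X :: "(real^'n) set" and Y :: "(real^'m) set"
    and f :: "real^'n \<Rightarrow> real^'m \<Rightarrow> real"
    and c :: "real^'n \<Rightarrow> real^'m \<Rightarrow> real^'p"
    and Df :: "(real^'n) \<times> (real^'m) \<Rightarrow> ((real^'n) \<times> (real^'m)) \<Rightarrow>\<^sub>L real"
    and Dc :: "(real^'n) \<times> (real^'m) \<Rightarrow> ((real^'n) \<times> (real^'m)) \<Rightarrow>\<^sub>L (real^'p)"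
    and U :: "((real^'n) \<times> (real^'m)) set"
    and \<rho> \<sigma> :: "nat \<Rightarrow> real" and k :: nat and M :: real and x :: "real^'n"
  assumes X: "X \<noteq> {}" "convex X" "compact X"
    and Y: "Y \<noteq> {}" "convex Y" "compact Y"
    and U: "open U" "X \<times> Y \<subseteq> U"
    and f_deriv: "\<And>z. z \<in> U \<Longrightarrow> ((\<lambda>z. f (fst z) (snd z)) has_derivative blinfun_apply (Df z)) (at z)"
    and f_C1: "continuous_on U Df"
    and f_lip: "\<exists>L. \<forall>z\<in>X \<times> Y. \<forall>w\<in>X \<times> Y. norm (Df z - Df w) \<le> L * dist z w"
    and f_concave: "\<And>x. x \<in> X \<Longrightarrow> concave_on Y (f x)"
    and c_deriv: "\<And>z. z \<in> U \<Longrightarrow> ((\<lambda>z. c (fst z) (snd z)) has_derivative blinfun_apply (Dc z)) (at z)"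
    and c_C1: "continuous_on U Dc"
    and c_lip: "\<exists>L. \<forall>z\<in>X \<times> Y. \<forall>w\<in>X \<times> Y. norm (Dc z - Dc w) \<le> L * dist z w"
    and c_convex: "\<And>x i. x \<in> X \<Longrightarrow> convex_on Y (\<lambda>y. c x y $ i)"
    and M_c: "\<And>x y. x \<in> X \<Longrightarrow> y \<in> Y \<Longrightarrow> norm (c x y) \<le> M"
    and M_Dc: "\<And>x y. x \<in> X \<Longrightarrow> y \<in> Y \<Longrightarrow> norm (Dc (x, y)) \<le> M"
    and M_y: "\<And>y. y \<in> Y \<Longrightarrow> norm y \<le> M"
    and rho: "\<rho> (Suc k) \<ge> \<rho> k" "\<rho> k > 0"
    and sigma: "\<sigma> k \<ge> \<sigma> (Suc k)" "\<sigma> (Suc k) > 0"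
    and xX: "x \<in> X"
  shows "norm (ystar Y f c (\<rho> (Suc k)) (\<sigma> (Suc k)) x - ystar Y f c (\<rho> k) (\<sigma> k) x)
           \<le> (\<rho> (Suc k) - \<rho> k) / \<sigma> k * M\<^sup>2 + (\<sigma> k - \<sigma> (Suc k)) / \<sigma> k * M"
proof -
  have inU: "(x, y) \<in> U" if "y \<in> Y" for y
    using U(2) xX that by blast
  have "norm (ystar Y f c (\<rho> (Suc k)) (\<sigma> (Suc k)) x - ystar Y f c (\<rho> k) (\<sigma> k) x)
      \<le> ((\<rho> (Suc k) - \<rho> k) * M\<^sup>2 + (\<sigma> k - \<sigma> (Suc k)) * M) / \<sigma> k"
  proof (rule norm_ystar_diff_le)
    show "continuous_on Y (f x)"
      using f_deriv inU by (intro continuous_on_slice_snd) blast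
    show "continuous_on Y (c x)"
      using c_deriv inU by (intro continuous_on_slice_snd) blast
    show "norm (c x u - c x v) \<le> M * norm (u - v)" if "u \<in> Y" "v \<in> Y" for u v
      by (rule norm_diff_slice_snd_le[OF Y(2) c_deriv[OF inU] M_Dc[OF xX] that])
  qed (use Y f_concave c_convex M_c M_y rho sigma xX in auto)
  then show ?thesis
    by (simp add: add_divide_distrib)
qed

end
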